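(* Let $L$ be a complete semilattice. Then $L$ is shrinkable if and only if for all $S,T\in\Sigma L$ such that the meet $\sigma_L(S)\wedge\sigma_L(T)$ exists in $L$, the meet $S\wedge T$ exists in $\Sigma L$ and $\sigma_L(S\wedge T)=\sigma_L(S)\wedge\sigma_L(T)$.
   Context: A complete semilattice is a poset in which every nonempty subset has a join (written $\sum$; a bottom element need not exist). For $x,x_i\in L$ write $x\le^*\sum_{i\in I}x_i$ if $x\le\sum_{i\in I_0}x_i$ for some finite nonempty $I_0\subseteq I$. $L$ is shrinkable if whenever $x\le\sum_{i\in I}x_i$ there is a family $(y_j)_{j\in J}$ in $L$ with $x=\sum_j y_j$ and $y_j\le^*\sum_{i\in I}x_i$ for every $j$. Suspension: on nonempty subsets of $L$ define the preorder $S\le T$ iff every $s\in S$ satisfies $s\le^*\sum T$ (i.e. $s$ is below the join of finitely many elements of $T$); $\Sigma L$ is the set of equivalence classes of nonempty subsets under the associated equivalence, with the induced partial order (joins in $\Sigma L$ are given by unions). $\sigma_L:\Sigma L\to L$ is $S\mapsto\sum S$. *)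

theory Defs
  imports Main
begin

definition is_join :: "'a::order set \<Rightarrow> 'a \<Rightarrow> bool" where
  "is_join S x \<longleftrightarrow> (\<forall>s\<in>S. s \<le> x) \<and> (\<forall>z. (\<forall>s\<in>S. s \<le> z) \<longrightarrow> x \<le> z)"

definition complete_semilattice :: "'a::order itself \<Rightarrow> bool" where
  "complete_semilattice _ \<longleftrightarrow> (\<forall>S::'a set. S \<noteq> {} \<longrightarrow> (\<exists>x. is_join S x))"

definition jn :: "'a::order set \<Rightarrow> 'a" where
  "jn S = (THE x. is_join S x)"

definition below_fin :: "'a::order \<Rightarrow> 'a set \<Rightarrow> bool" where
  "below_fin x X \<longleftrightarrow> (\<exists>F. finite F \<and> F \<noteq> {} \<and> F \<subseteq> X \<and> x \<le> jn F)"

definition shrinkable :: "'a::order itself \<Rightarrow> bool" where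
  "shrinkable _ \<longleftrightarrow> (\<forall>(x::'a) X. X \<noteq> {} \<longrightarrow> x \<le> jn X \<longrightarrow>
      (\<exists>Y. Y \<noteq> {} \<and> x = jn Y \<and> (\<forall>y\<in>Y. below_fin y X)))"

definition susp_le :: "'a::order set \<Rightarrow> 'a set \<Rightarrow> bool" where
  "susp_le S T \<longleftrightarrow> (\<forall>s\<in>S. below_fin s T)"

definition susp_rel :: "'a::order itself \<Rightarrow> ('a set \<times> 'a set) set" where
  "susp_rel _ = {(S, T). S \<noteq> {} \<and> T \<noteq> {} \<and> susp_le S T \<and> susp_le T S}"

definition Susp :: "'a::order itself \<Rightarrow> 'a set set set" where
  "Susp t = {S::'a set. S \<noteq> {}} // susp_rel t"

definition susp_cls_le :: "'a::order set set \<Rightarrow> 'a set set \<Rightarrow> bool" where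
  "susp_cls_le A B \<longleftrightarrow> (\<exists>S\<in>A. \<exists>T\<in>B. susp_le S T)"

definition sigma :: "'a::order set set \<Rightarrow> 'a" where
  "sigma A = jn (SOME S. S \<in> A)"

definition is_meet :: "'a::order \<Rightarrow> 'a \<Rightarrow> 'a \<Rightarrow> bool" where
  "is_meet a b m \<longleftrightarrow> m \<le> a \<and> m \<le> b \<and> (\<forall>z. z \<le> a \<longrightarrow> z \<le> b \<longrightarrow> z \<le> m)"

definition is_susp_meet :: "'a::order itself \<Rightarrow> 'a set set \<Rightarrow> 'a set set \<Rightarrow> 'a set set \<Rightarrow> bool" where
  "is_susp_meet t A B C \<longleftrightarrow> C \<in> Susp t \<and> susp_cls_le C A \<and> susp_cls_le C B \<and>
     (\<forall>D\<in>Susp t. susp_cls_le D A \<longrightarrow> susp_cls_le D B \<longrightarrow> susp_cls_le D C)"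

end

theory Submission
  imports Defs
begin

text \<open>Let U be the set of elements lying below a finite join from S and below a finite join
from T. Whenever U is nonempty, its class is the meet of the classes of S and T in the
suspension. Shrinkability is exactly what makes \<open>\<Sum>U\<close> reach the meet m of \<open>\<Sum>S\<close> and
\<open>\<Sum>T\<close>: shrink m against S, then shrink every resulting piece against T; all the pieces so
obtained lie in U. Conversely, if x \<le> \<Sum>X then x is the meet of \<Sum>X and x, so the
classes of X and {x} have a meet with join x, and any representative of it is a shrinking
family for x.\<close>

abbreviation susp_cls :: "'a::order set \<Rightarrow> 'a set set" where
  "susp_cls S \<equiv> susp_rel TYPE('a) `` {S}"

definition common_below :: "'a::order set \<Rightarrow> 'a set \<Rightarrow> 'a set" where
  "common_below S T = {u. below_fin u S \<and> below_fin u T}"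

lemma susp_cls_iff:
  "T \<in> susp_cls S \<longleftrightarrow> S \<noteq> {} \<and> T \<noteq> {} \<and> susp_le S T \<and> susp_le T S"
  unfolding susp_rel_def by auto

lemma SuspE:
  assumes "A \<in> Susp TYPE('a::order)"
  obtains S where "S \<noteq> {}" "A = susp_cls S"
  using assms unfolding Susp_def quotient_def by blast

lemma susp_cls_in_Susp: "S \<noteq> {} \<Longrightarrow> susp_cls S \<in> Susp TYPE('a::order)"
  unfolding Susp_def quotient_def by blast

lemma below_fin_mono:
  assumes "(z::'a::order) \<le> y" and "below_fin y S"
  shows "below_fin z S"
  using assms unfolding below_fin_def by (meson order_trans)

lemma susp_le_common_below: "susp_le (common_below S T) S" "susp_le (common_below S T) T"
  unfolding common_below_def susp_le_def by auto

context
  assumes cs: "complete_semilattice TYPE('a::order)"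
begin

lemma is_join_jn:
  assumes "(S::'a set) \<noteq> {}"
  shows "is_join S (jn S)"
proof -
  obtain x where x: "is_join S x"
    using cs assms unfolding complete_semilattice_def by blast
  moreover have "y = x" if "is_join S y" for y
    using x that unfolding is_join_def by (meson order_antisym)
  ultimately show ?thesis
    unfolding jn_def by (rule theI)
qed

lemma jn_upper: "(s::'a) \<in> S \<Longrightarrow> s \<le> jn S"
  using is_join_jn[of S] unfolding is_join_def by blast

lemma jn_least: "(S::'a set) \<noteq> {} \<Longrightarrow> (\<And>s. s \<in> S \<Longrightarrow> s \<le> z) \<Longrightarrow> jn S \<le> z"
  using is_join_jn[of S] unfolding is_join_def by blast

lemma jn_mono: "(A::'a set) \<noteq> {} \<Longrightarrow> A \<subseteq> B \<Longrightarrow> jn A \<le> jn B"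
  by (meson jn_least jn_upper subsetD)

lemma jn_singleton [simp]: "jn {x::'a} = x"
  using jn_least[of "{x}" x] jn_upper[of x "{x}"] by auto

lemma below_fin_le_jn: "below_fin (x::'a) X \<Longrightarrow> x \<le> jn X"
  unfolding below_fin_def by (meson jn_mono order_trans)

lemma below_fin_member: "(s::'a) \<in> S \<Longrightarrow> below_fin s S"
  unfolding below_fin_def by (intro exI[of _ "{s}"]) auto

lemma below_fin_susp_le_trans:
  assumes "below_fin (x::'a) S" and "susp_le S T"
  shows "below_fin x T"
proof -
  obtain F where F: "finite F" "F \<noteq> {}" "F \<subseteq> S" "x \<le> jn F"
    using assms(1) unfolding below_fin_def by blast
  have "\<forall>f\<in>F. \<exists>G. finite G \<and> G \<noteq> {} \<and> G \<subseteq> T \<and> f \<le> jn G"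
    using F(3) assms(2) unfolding susp_le_def below_fin_def by blast
  then obtain G where G: "\<And>f. f \<in> F \<Longrightarrow> finite (G f) \<and> G f \<noteq> {} \<and> G f \<subseteq> T \<and> f \<le> jn (G f)"
    by metis
  have "jn F \<le> jn (\<Union>(G ` F))"
  proof (rule jn_least[OF F(2)])
    fix f assume "f \<in> F"
    with G have "f \<le> jn (G f)" and "jn (G f) \<le> jn (\<Union>(G ` F))"
      by (auto intro!: jn_mono)
    then show "f \<le> jn (\<Union>(G ` F))" by (rule order_trans)
  qed
  with F(4) have "x \<le> jn (\<Union>(G ` F))" by (rule order_trans)
  moreover have "finite (\<Union>(G ` F))" "\<Union>(G ` F) \<noteq> {}" "\<Union>(G ` F) \<subseteq> T"
    using F(1,2) G by auto
  ultimately show ?thesis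
    unfolding below_fin_def by blast
qed

lemma susp_le_refl: "susp_le (S::'a set) S"
  unfolding susp_le_def using below_fin_member by blast

lemma susp_le_trans:
  assumes "susp_le (S::'a set) T" and "susp_le T U"
  shows "susp_le S U"
  using assms(1) below_fin_susp_le_trans[OF _ assms(2)] unfolding susp_le_def by blast

lemma susp_le_jn: "(S::'a set) \<noteq> {} \<Longrightarrow> susp_le S T \<Longrightarrow> jn S \<le> jn T"
  unfolding susp_le_def by (meson below_fin_le_jn jn_least)

lemma self_in_susp_cls: "(S::'a set) \<noteq> {} \<Longrightarrow> S \<in> susp_cls S"
  by (simp add: susp_rel_def susp_le_refl)

lemma sigma_susp_cls:
  assumes "(S::'a set) \<noteq> {}"
  shows "sigma (susp_cls S) = jn S"
proof -
  define S' where "S' = (SOME S'. S' \<in> susp_cls S)"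
  have "S' \<in> susp_cls S"
    unfolding S'_def using self_in_susp_cls[OF assms] by (rule someI)
  then have "S' \<noteq> {}" "susp_le S S'" "susp_le S' S"
    unfolding susp_cls_iff by auto
  then have "jn S' = jn S"
    using assms by (simp add: order_antisym susp_le_jn)
  then show ?thesis
    unfolding sigma_def S'_def .
qed

lemma susp_cls_le_iff:
  assumes "(S::'a set) \<noteq> {}" and "T \<noteq> {}"
  shows "susp_cls_le (susp_cls S) (susp_cls T) \<longleftrightarrow> susp_le S T"
proof
  assume "susp_cls_le (susp_cls S) (susp_cls T)"
  then obtain S' T' where "S' \<in> susp_cls S" "T' \<in> susp_cls T" "susp_le S' T'"
    unfolding susp_cls_le_def by blast
  then have "susp_le S S'" "susp_le S' T'" "susp_le T' T"
    unfolding susp_cls_iff by auto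
  then show "susp_le S T"
    by (rule susp_le_trans[OF susp_le_trans])
next
  assume "susp_le S T"
  then show "susp_cls_le (susp_cls S) (susp_cls T)"
    using self_in_susp_cls[OF assms(1)] self_in_susp_cls[OF assms(2)]
    unfolding susp_cls_le_def by blast
qed

lemma susp_le_common_belowI:
  "susp_le (V::'a set) S \<Longrightarrow> susp_le V T \<Longrightarrow> susp_le V (common_below S T)"
  unfolding susp_le_def by (simp add: below_fin_member common_below_def)

lemma is_susp_meet_common_below:
  assumes "(S::'a set) \<noteq> {}" "T \<noteq> {}" "common_below S T \<noteq> {}"
  shows "is_susp_meet TYPE('a) (susp_cls S) (susp_cls T) (susp_cls (common_below S T))"
  unfolding is_susp_meet_def
proof (intro conjI ballI impI)
  show "susp_cls (common_below S T) \<in> Susp TYPE('a)"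
    using assms(3) by (rule susp_cls_in_Susp)
  show "susp_cls_le (susp_cls (common_below S T)) (susp_cls S)"
       "susp_cls_le (susp_cls (common_below S T)) (susp_cls T)"
    using assms susp_le_common_below by (simp_all add: susp_cls_le_iff)
  fix D assume "D \<in> Susp TYPE('a)" "susp_cls_le D (susp_cls S)" "susp_cls_le D (susp_cls T)"
  moreover obtain V where "V \<noteq> {}" "D = susp_cls V"
    using \<open>D \<in> Susp TYPE('a)\<close> by (rule SuspE)
  ultimately show "susp_cls_le D (susp_cls (common_below S T))"
    using assms by (simp add: susp_cls_le_iff susp_le_common_belowI)
qed

lemma shrinkableE:
  assumes "shrinkable TYPE('a)" "(X::'a set) \<noteq> {}" "x \<le> jn X"
  obtains Y where "Y \<noteq> {}" "x = jn Y" "\<And>y. y \<in> Y \<Longrightarrow> below_fin y X \<and> y \<le> x"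
  using assms unfolding shrinkable_def by (metis jn_upper)

lemma shrinkable_le_jn_common_below:
  assumes shr: "shrinkable TYPE('a)" and "(S::'a set) \<noteq> {}" "T \<noteq> {}"
    and "x \<le> jn S" "x \<le> jn T"
  shows "common_below S T \<noteq> {}" "x \<le> jn (common_below S T)"
proof -
  obtain Y where Y: "Y \<noteq> {}" "x = jn Y" "\<And>y. y \<in> Y \<Longrightarrow> below_fin y S \<and> y \<le> x"
    using shrinkableE[OF shr assms(2,4)] by blast
  have pieces: "\<exists>Z. Z \<noteq> {} \<and> Z \<subseteq> common_below S T \<and> y = jn Z" if "y \<in> Y" for y
  proof -
    have "y \<le> jn T" using Y(3)[OF that] assms(5) by (rule order_trans[OF conjunct2])
    then obtain Z where Z: "Z \<noteq> {}" "y = jn Z" "\<And>z. z \<in> Z \<Longrightarrow> below_fin z T \<and> z \<le> y"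
      using shrinkableE[OF shr assms(3)] by blast
    have "Z \<subseteq> common_below S T"
      unfolding common_below_def using Y(3)[OF that] Z(3) by (blast intro: below_fin_mono)
    with Z show ?thesis by blast
  qed
  then show "common_below S T \<noteq> {}" using Y(1) by blast
  show "x \<le> jn (common_below S T)"
    unfolding Y(2)
  proof (rule jn_least[OF Y(1)])
    fix y assume "y \<in> Y"
    then obtain Z where "Z \<noteq> {}" "Z \<subseteq> common_below S T" "y = jn Z"
      using pieces by blast
    then show "y \<le> jn (common_below S T)" by (simp add: jn_mono)
  qed
qed

lemma jn_common_below_le_meet:
  assumes "is_meet (jn S) (jn T) m" "common_below S T \<noteq> {}"
  shows "jn (common_below (S::'a set) T) \<le> m"
  using assms unfolding is_meet_def common_below_def by (auto intro!: jn_least below_fin_le_jn)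

lemma susp_meet_if_shrinkable:
  assumes shr: "shrinkable TYPE('a)"
    and A: "A \<in> Susp TYPE('a)" and B: "B \<in> Susp TYPE('a)"
    and meet: "is_meet (sigma A) (sigma B) (m::'a)"
  shows "\<exists>C. is_susp_meet TYPE('a) A B C \<and> sigma C = m"
proof -
  obtain S T where S: "S \<noteq> {}" "A = susp_cls S" and T: "T \<noteq> {}" "B = susp_cls T"
    using A B by (metis SuspE)
  have meetST: "is_meet (jn S) (jn T) m"
    using meet S T by (simp add: sigma_susp_cls)
  then have "m \<le> jn S" "m \<le> jn T" unfolding is_meet_def by auto
  note U = shrinkable_le_jn_common_below[OF shr S(1) T(1) this]
  have "jn (common_below S T) = m"
    using U jn_common_below_le_meet[OF meetST] by (meson order_antisym)
  then have "sigma (susp_cls (common_below S T)) = m"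
    using U(1) by (simp add: sigma_susp_cls)
  with is_susp_meet_common_below[OF S(1) T(1) U(1)] show ?thesis
    unfolding S(2) T(2) by blast
qed

lemma shrinkable_if_susp_meet:
  assumes meets: "\<And>A B m. A \<in> Susp TYPE('a) \<Longrightarrow> B \<in> Susp TYPE('a) \<Longrightarrow>
      is_meet (sigma A) (sigma B) (m::'a) \<Longrightarrow> \<exists>C. is_susp_meet TYPE('a) A B C \<and> sigma C = m"
  shows "shrinkable TYPE('a)"
  unfolding shrinkable_def
proof (intro allI impI)
  fix x :: 'a and X assume X: "X \<noteq> {}" and "x \<le> jn X"
  then have "is_meet (sigma (susp_cls X)) (sigma (susp_cls {x})) x"
    by (simp add: sigma_susp_cls is_meet_def)
  then obtain C where C: "is_susp_meet TYPE('a) (susp_cls X) (susp_cls {x}) C" "sigma C = x"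
    using meets X by (blast intro: susp_cls_in_Susp)
  then obtain U where U: "U \<noteq> {}" "C = susp_cls U" "susp_cls_le C (susp_cls X)"
    unfolding is_susp_meet_def by (blast elim: SuspE)
  then have "susp_le U X" "x = jn U"
    using X C(2) by (simp_all add: susp_cls_le_iff sigma_susp_cls)
  with U(1) show "\<exists>Y. Y \<noteq> {} \<and> x = jn Y \<and> (\<forall>y\<in>Y. below_fin y X)"
    unfolding susp_le_def by blast
qed

end

theorem mainTheorem3:
  assumes "complete_semilattice TYPE('a::order)"
  shows "shrinkable TYPE('a) \<longleftrightarrow>
    (\<forall>A\<in>Susp TYPE('a). \<forall>B\<in>Susp TYPE('a). \<forall>m::'a.
       is_meet (sigma A) (sigma B) m \<longrightarrow>
       (\<exists>C. is_susp_meet TYPE('a) A B C \<and> sigma C = m))"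
  using susp_meet_if_shrinkable[OF assms] shrinkable_if_susp_meet[OF assms] by blast

end
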